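(* Let $\mathcal{P}_1=\{f\in\mathcal{P}:\sum_{k=1}^n|\hat{f}_k|\le 1\}$. Then $\mathcal{P}_1$ is convex and compact, its extreme points are exactly $\mathbb{0},u_1,\dots,u_n$ (where $\mathbb{0}$ is the zero signal), and $$\mathcal{P}_1=\mathrm{conv}\{\mathbb{0},u_1,\dots,u_n\}.$$
   Context: Let $G$ be a graph with vertices $v_1,\dots,v_n$, symmetric non-negative weighted adjacency matrix $\mathbf{A}$, degree matrix $\mathbf{D}=\mathrm{diag}(\sum_k\mathbf{A}_{ik})$ (positive), and normalized Laplacian $\mathbf{L}=\mathbf{I}_n-\mathbf{D}^{-1/2}\mathbf{A}\mathbf{D}^{-1/2}$. Signals are vectors in $\mathcal{L}(G)\cong\mathbb{R}^n$ with standard basis $e_1,\dots,e_n$. Fix an orthonormal eigendecomposition $\mathbf{L}=\mathbf{U}\,\mathrm{diag}(\lambda_1,\dots,\lambda_n)\mathbf{U}^\intercal$ with columns $u_1,\dots,u_n$. Fourier transform $\hat{x}=\mathbf{U}^\intercal x$; convolution operator $\mathbf{C}_x=\mathbf{U}\,\mathrm{diag}(\hat{x})\mathbf{U}^\intercal$. For $f\in\mathcal{L}(G)$ let $(\mathbf{K}_f)_{ij}=(\mathbf{C}_{e_j}f)(v_i)$; $f$ is positive semi-definite if $\mathbf{K}_f$ is symmetric positive semi-definite. $\mathcal{P}$ denotes the set of positive semi-definite functions. *)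

theory Defs
  imports "HOL-Analysis.Analysis"
begin

text \<open>Vertices are indexed by a finite type 'n (so n = CARD('n)); signals are real^'n,
 matrices are real^'n^'n.\<close>

definition diag_mat :: "real^'n \<Rightarrow> real^'n^'n" where
  "diag_mat d = (\<chi> i j. if i = j then d $ i else 0)"

definition degree_vec :: "real^'n^'n \<Rightarrow> real^'n" where
  "degree_vec A = (\<chi> i. \<Sum>k\<in>UNIV. A $ i $ k)"

definition normalized_laplacian :: "real^'n^'n \<Rightarrow> real^'n^'n" where
  "normalized_laplacian A =
     mat 1 - diag_mat (\<chi> i. 1 / sqrt (degree_vec A $ i)) ** A
             ** diag_mat (\<chi> i. 1 / sqrt (degree_vec A $ i))"

definition gft :: "real^'n^'n \<Rightarrow> real^'n \<Rightarrow> real^'n" where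
  "gft U x = transpose U *v x"

definition conv_op :: "real^'n^'n \<Rightarrow> real^'n \<Rightarrow> real^'n^'n" where
  "conv_op U x = U ** diag_mat (gft U x) ** transpose U"

definition kernel_mat :: "real^'n^'n \<Rightarrow> real^'n \<Rightarrow> real^'n^'n" where
  "kernel_mat U f = (\<chi> i j. (conv_op U (axis j 1) *v f) $ i)"

definition psd_matrix :: "real^'n^'n \<Rightarrow> bool" where
  "psd_matrix K \<longleftrightarrow> transpose K = K \<and> (\<forall>x. 0 \<le> x \<bullet> (K *v x))"

definition psd_functions :: "real^'n^'n \<Rightarrow> (real^'n) set" where
  "psd_functions U = {f. psd_matrix (kernel_mat U f)}"

definition P1 :: "real^'n^'n \<Rightarrow> (real^'n) set" where
  "P1 U = {f \<in> psd_functions U. (\<Sum>k\<in>UNIV. \<bar>gft U f $ k\<bar>) \<le> 1}"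

end

theory Submission
  imports Defs
begin

(* Since C_(e_j) f = C_f e_j, the kernel matrix K_f is the convolution operator
   C_f = U diag(f^) U^T, so f is positive semi-definite iff all Fourier coefficients are
   nonnegative.  Hence P_1 is the preimage of the standard simplex under the Fourier
   transform, i.e. its image under U, which is the convex hull of 0 and the columns of U.
   As U is invertible, these n + 1 points are affinely independent, so they are exactly
   the extreme points of the simplex they span. *)

lemma kernel_mat_eq_conv_op: "kernel_mat U f = conv_op U f"
  unfolding kernel_mat_def conv_op_def
  apply (simp add: vec_eq_iff matrix_matrix_mult_def matrix_vector_mult_def diag_mat_def
      gft_def transpose_def axis_def if_distrib[of "\<lambda>x. _ * x"] cong: if_cong)
  apply (simp add: sum_distrib_left sum_distrib_right mult_ac)
  apply (subst sum.swap)
  apply (simp add: mult_ac)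
  done

lemma transpose_diag_mat [simp]: "transpose (diag_mat d) = diag_mat d"
  by (simp add: vec_eq_iff transpose_def diag_mat_def)

lemma inner_diag_mat: "x \<bullet> (diag_mat d *v x) = (\<Sum>k\<in>UNIV. d $ k * (x $ k)\<^sup>2)"
  by (simp add: inner_vec_def matrix_vector_mult_def diag_mat_def power2_eq_square mult_ac
      if_distrib[of "\<lambda>x. x * _"] if_distrib[of "\<lambda>x. _ * x"] cong: if_cong)

lemma psd_matrix_orthogonal_conj_diag_iff:
  assumes "orthogonal_matrix U"
  shows "psd_matrix (U ** diag_mat d ** transpose U) \<longleftrightarrow> (\<forall>k. 0 \<le> d $ k)"
proof -
  have UtU: "transpose U ** U = mat 1"
    using assms by (simp add: orthogonal_matrix_def)
  have sym: "transpose (U ** diag_mat d ** transpose U) = U ** diag_mat d ** transpose U"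
    by (simp add: matrix_transpose_mul matrix_mul_assoc)
  have quad: "x \<bullet> ((U ** diag_mat d ** transpose U) *v x)
      = (transpose U *v x) \<bullet> (diag_mat d *v (transpose U *v x))" for x
    by (simp add: matrix_vector_mul_assoc[symmetric] dot_lmul_matrix[symmetric])
  show ?thesis
  proof
    assume psd: "psd_matrix (U ** diag_mat d ** transpose U)"
    show "\<forall>k. 0 \<le> d $ k"
    proof
      fix k
      have recover: "transpose U *v (U *v axis k 1) = axis k 1"
        by (simp only: matrix_vector_mul_assoc UtU matrix_vector_mul_lid)
      have "0 \<le> (U *v axis k 1) \<bullet> ((U ** diag_mat d ** transpose U) *v (U *v axis k 1))"
        using psd unfolding psd_matrix_def by blast
      then have "0 \<le> axis k 1 \<bullet> (diag_mat d *v axis k (1::real))"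
        unfolding quad recover .
      then show "0 \<le> d $ k"
        by (simp add: inner_diag_mat axis_def if_distrib[of "\<lambda>x. x\<^sup>2"]
            if_distrib[of "\<lambda>x. _ * x"] cong: if_cong)
    qed
  next
    assume "\<forall>k. 0 \<le> d $ k"
    then show "psd_matrix (U ** diag_mat d ** transpose U)"
      unfolding psd_matrix_def using sym quad by (auto simp: inner_diag_mat intro!: sum_nonneg)
  qed
qed

lemma psd_functions_iff_gft_nonneg:
  assumes "orthogonal_matrix U"
  shows "f \<in> psd_functions U \<longleftrightarrow> (\<forall>k. 0 \<le> gft U f $ k)"
  by (simp add: psd_functions_def kernel_mat_eq_conv_op conv_op_def
      psd_matrix_orthogonal_conj_diag_iff[OF assms])

lemma gft_matrix_vector_mult:
  assumes "orthogonal_matrix U"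
  shows "gft U (U *v v) = v"
  using assms unfolding gft_def orthogonal_matrix_def
  by (simp only: matrix_vector_mul_assoc matrix_vector_mul_lid)

lemma matrix_vector_mult_gft:
  assumes "orthogonal_matrix U"
  shows "U *v gft U f = f"
  using assms unfolding gft_def orthogonal_matrix_def
  by (simp only: matrix_vector_mul_assoc matrix_vector_mul_lid)

lemma Basis_cart_real: "(Basis :: (real^'n) set) = range (\<lambda>k. axis k 1)"
  by (auto simp: Basis_vec_def)

lemma std_simplex_cart:
  "convex hull (insert 0 Basis) =
    {v :: real^'n. (\<forall>k. 0 \<le> v $ k) \<and> (\<Sum>k\<in>UNIV. v $ k) \<le> 1}"
proof -
  have "(\<Sum>i\<in>Basis. v \<bullet> i) = (\<Sum>k\<in>UNIV. v $ k)" for v :: "real^'n"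
    unfolding Basis_cart_real
    by (simp add: sum.reindex inj_on_def axis_eq_axis cart_eq_inner_axis)
  then show ?thesis
    unfolding std_simplex by (auto simp: Basis_cart_real cart_eq_inner_axis)
qed

lemma columns_eq_image_Basis:
  fixes M :: "real^'n^'m"
  shows "columns M = (*v) M ` Basis"
  by (simp add: columns_image_basis Basis_cart_real)

lemma convex_hull_insert_0_columns:
  fixes M :: "real^'n^'m"
  shows "convex hull (insert 0 (columns M)) = (*v) M ` (convex hull (insert 0 Basis))"
  by (simp add: columns_eq_image_Basis convex_hull_linear_image)

lemma affine_independent_insert_0_columns:
  fixes M :: "real^'n^'n"
  assumes "invertible M"
  shows "\<not> affine_dependent (insert 0 (columns M))"
proof -
  have inj: "inj ((*v) M)"
    using assms by (rule inj_matrix_vector_mult)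
  have "independent (columns M)"
    unfolding columns_eq_image_Basis
    using linear_independent_injective_image[OF matrix_vector_mul_linear independent_Basis]
      inj_on_subset[OF inj] by blast
  moreover have "0 \<notin> columns M"
    unfolding columns_eq_image_Basis using inj
    by (metis imageE matrix_vector_mult_0_right inj_eq zero_not_in_Basis)
  ultimately show ?thesis
    by (simp add: affine_dependent_iff_dependent)
qed

lemma P1_eq_image_std_simplex:
  assumes U: "orthogonal_matrix U"
  shows "P1 U = (*v) U ` (convex hull (insert 0 Basis))"
proof -
  have "P1 U = {f. gft U f \<in> convex hull (insert 0 Basis)}"
    by (auto simp: P1_def std_simplex_cart psd_functions_iff_gft_nonneg[OF U])
  also have "\<dots> = (*v) U ` (convex hull (insert 0 Basis))"
    by (force simp: gft_matrix_vector_mult[OF U] matrix_vector_mult_gft[OF U]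
        intro: image_eqI[where x = "gft U f" for f])
  finally show ?thesis .
qed

theorem theorem2:
  fixes A U :: "real^'n^'n" and lam :: "real^'n"
  assumes A_sym: "transpose A = A"
    and A_nonneg: "\<forall>i j. 0 \<le> A $ i $ j"
    and deg_pos: "\<forall>i. 0 < degree_vec A $ i"
    and U_orth: "orthogonal_matrix U"
    and eig: "normalized_laplacian A = U ** diag_mat lam ** transpose U"
  shows "convex (P1 U) \<and> compact (P1 U)
    \<and> {x. x extreme_point_of (P1 U)} = insert 0 {column k U | k. True}
    \<and> P1 U = convex hull (insert 0 {column k U | k. True})"
proof -
  have columns: "{column k U | k. True} = columns U"
    by (simp add: columns_def)
  have hull: "P1 U = convex hull (insert 0 (columns U))"
    by (simp add: P1_eq_image_std_simplex[OF U_orth] convex_hull_insert_0_columns)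
  have "invertible U"
    using U_orth by (auto simp: invertible_def orthogonal_matrix_def)
  then have "\<not> affine_dependent (insert 0 (columns U))"
    by (rule affine_independent_insert_0_columns)
  moreover have "finite (columns U)"
    by (simp add: columns_eq_image_Basis)
  ultimately show ?thesis
    unfolding columns hull
    by (auto simp: extreme_point_of_convex_hull_affine_independent finite_imp_compact_convex_hull)
qed

end
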